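(* For every $n\in\mathbb{N}$, every (not necessarily linear) weak-2-local derivation $\Delta: M_n\to M_n$ on the C$^*$-algebra $M_n=M_n(\mathbb{C})$ of complex $n\times n$ matrices is a linear derivation.
   Context: A derivation on a C$^*$-algebra $A$ is a linear map $D:A\to A$ with $D(ab)=D(a)b+aD(b)$. A (not necessarily linear) map $\Delta:A\to A$ is a weak-2-local derivation if for every $a,b\in A$ and every $\phi\in A^*$ there exists a derivation $D_{a,b,\phi}:A\to A$ such that $\phi\Delta(a)=\phi D_{a,b,\phi}(a)$ and $\phi\Delta(b)=\phi D_{a,b,\phi}(b)$. *)

theory Defs
  imports Complex_Main "Jordan_Normal_Form.Matrix"
begin

text \<open>The C*-algebra M_n(C) is represented by carrier_mat n n :: complex mat set.
  Maps are considered only on this carrier.\<close>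

definition is_derivation :: "nat \<Rightarrow> (complex mat \<Rightarrow> complex mat) \<Rightarrow> bool" where
  "is_derivation n D \<longleftrightarrow>
     (\<forall>A \<in> carrier_mat n n. D A \<in> carrier_mat n n) \<and>
     (\<forall>A \<in> carrier_mat n n. \<forall>B \<in> carrier_mat n n. D (A + B) = D A + D B) \<and>
     (\<forall>c. \<forall>A \<in> carrier_mat n n. D (c \<cdot>\<^sub>m A) = c \<cdot>\<^sub>m D A) \<and>
     (\<forall>A \<in> carrier_mat n n. \<forall>B \<in> carrier_mat n n. D (A * B) = D A * B + A * D B)"

text \<open>Elements of the dual space of M_n(C): (complex) linear functionals;
  in finite dimension all linear functionals are continuous.\<close>
definition is_dual_functional :: "nat \<Rightarrow> (complex mat \<Rightarrow> complex) \<Rightarrow> bool" where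
  "is_dual_functional n \<phi> \<longleftrightarrow>
     (\<forall>A \<in> carrier_mat n n. \<forall>B \<in> carrier_mat n n. \<phi> (A + B) = \<phi> A + \<phi> B) \<and>
     (\<forall>c. \<forall>A \<in> carrier_mat n n. \<phi> (c \<cdot>\<^sub>m A) = c * \<phi> A)"

definition weak_2_local_derivation :: "nat \<Rightarrow> (complex mat \<Rightarrow> complex mat) \<Rightarrow> bool" where
  "weak_2_local_derivation n \<Delta> \<longleftrightarrow>
     (\<forall>A \<in> carrier_mat n n. \<Delta> A \<in> carrier_mat n n) \<and>
     (\<forall>A \<in> carrier_mat n n. \<forall>B \<in> carrier_mat n n. \<forall>\<phi>. is_dual_functional n \<phi> \<longrightarrow>
        (\<exists>D. is_derivation n D \<and> \<phi> (\<Delta> A) = \<phi> (D A) \<and> \<phi> (\<Delta> B) = \<phi> (D B)))"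

end

theory Submission
  imports Defs
begin

(*
  A derivation of M_n is inner, D x = a x - x a, and tr ((a x - x a) y) = tr (a (x y - y x)),
  so tr (D x * y) depends on x only modulo the commutant of y.  Testing a weak-2-local
  derivation \<Delta> against the functionals tr (- * y) transfers this to \<Delta>.

  Put B x y = tr (\<Delta> x * y).  The elements w = u + e, u and e commute with themselves, which
  relates B at x + w to its values at x, x + e and x + u:
    B (x + e) u = B x u + B x e - B (x + u) e.
  At x = 0 this makes B skew-symmetric, and then the identity says that B, hence \<Delta>, is
  additive.  Homogeneity of \<Delta> comes from the coordinate functionals, so \<Delta> is linear.

  For linear \<Delta>, B vanishes on commuting pairs.  Evaluating it on suitable commuting sums of
  matrix units gives B (E i j) (E p q) = [j = p] a q i - [q = i] a j p with a q i = B (E i 0) (E 0 q),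
  i.e. \<Delta> is the inner derivation x \<mapsto> a x - x a.
*)

section \<open>Matrix units and the trace\<close>

definition mat_unit :: "nat \<Rightarrow> nat \<Rightarrow> nat \<Rightarrow> 'a :: zero_neq_one mat" where
  "mat_unit n i j = mat n n (\<lambda>(p, q). if p = i \<and> q = j then 1 else 0)"

lemma mat_unit_carrier [simp]: "mat_unit n i j \<in> carrier_mat n n"
  by (simp add: mat_unit_def)

lemma dim_mat_unit [simp]: "dim_row (mat_unit n i j) = n" "dim_col (mat_unit n i j) = n"
  by (simp_all add: mat_unit_def)

lemma index_mat_unit [simp]:
  "p < n \<Longrightarrow> q < n \<Longrightarrow> mat_unit n i j $$ (p, q) = (if p = i \<and> q = j then 1 else 0)"
  by (simp add: mat_unit_def)

lemma index_mult_mat_unit_right: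
  fixes A :: "'a :: semiring_1 mat"
  assumes "A \<in> carrier_mat n n" "p < n" "q < n" "i < n"
  shows "(A * mat_unit n i j) $$ (p, q) = (if q = j then A $$ (p, i) else 0)"
  using assms by (auto simp: scalar_prod_def if_distrib cong: if_cong)

lemma index_mult_mat_unit_left:
  fixes A :: "'a :: semiring_1 mat"
  assumes "A \<in> carrier_mat n n" "p < n" "q < n" "j < n"
  shows "(mat_unit n i j * A) $$ (p, q) = (if p = i then A $$ (j, q) else 0)"
proof -
  have "(mat_unit n i j * A) $$ (p, q) = (\<Sum>k<n. (if p = i \<and> k = j then 1 else 0) * A $$ (k, q))"
    using assms by (simp add: scalar_prod_def atLeast0LessThan)
  also have "\<dots> = (\<Sum>k<n. if k = j then (if p = i then A $$ (k, q) else 0) else 0)"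
    by (rule sum.cong) auto
  finally show ?thesis using assms by simp
qed

lemmas index_mult_mat_units = index_mult_mat_unit_right index_mult_mat_unit_left index_mult_mat(2,3)

lemma mat_unit_mult:
  assumes "i < n" "j < n" "k < n" "l < n"
  shows "mat_unit n i j * mat_unit n k l =
    (if j = k then mat_unit n i l else (0\<^sub>m n n :: 'a :: semiring_1 mat))"
  by (rule eq_matI) (use assms in \<open>auto simp del: index_mult_mat simp: index_mult_mat_units\<close>)

definition mat_trace :: "'a :: comm_ring_1 mat \<Rightarrow> 'a" where
  "mat_trace A = (\<Sum>i<dim_row A. A $$ (i, i))"

lemma mat_trace_add:
  "A \<in> carrier_mat n n \<Longrightarrow> B \<in> carrier_mat n n \<Longrightarrow> mat_trace (A + B) = mat_trace A + mat_trace B"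
  by (simp add: mat_trace_def sum.distrib)

lemma mat_trace_minus:
  "A \<in> carrier_mat n n \<Longrightarrow> B \<in> carrier_mat n n \<Longrightarrow> mat_trace (A - B) = mat_trace A - mat_trace B"
  by (simp add: mat_trace_def sum_subtractf)

lemma mat_trace_smult: "A \<in> carrier_mat n n \<Longrightarrow> mat_trace (c \<cdot>\<^sub>m A) = c * mat_trace A"
  by (simp add: mat_trace_def sum_distrib_left)

lemma mat_trace_zero [simp]: "mat_trace (0\<^sub>m n n) = 0"
  by (simp add: mat_trace_def)

lemma mat_trace_mult_comm:
  assumes "A \<in> carrier_mat n n" "B \<in> carrier_mat n n"
  shows "mat_trace (A * B) = mat_trace (B * A)"
proof -
  have "mat_trace (A * B) = (\<Sum>i<n. \<Sum>k<n. A $$ (i, k) * B $$ (k, i))"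
    using assms by (simp add: mat_trace_def scalar_prod_def atLeast0LessThan)
  also have "\<dots> = (\<Sum>k<n. \<Sum>i<n. A $$ (i, k) * B $$ (k, i))"
    by (rule sum.swap)
  also have "\<dots> = mat_trace (B * A)"
    using assms by (simp add: mat_trace_def scalar_prod_def atLeast0LessThan mult.commute)
  finally show ?thesis .
qed

lemma mat_trace_mult_mat_unit:
  assumes "A \<in> carrier_mat n n" "i < n" "j < n"
  shows "mat_trace (A * mat_unit n i j) = A $$ (j, i)"
proof -
  have "mat_trace (A * mat_unit n i j) = (\<Sum>p<n. if p = j then A $$ (p, i) else 0)"
    unfolding mat_trace_def using assms
    by (intro sum.cong) (auto simp del: index_mult_mat simp: index_mult_mat_units)
  thus ?thesis using assms by simp
qed

lemma mat_eq_by_trace: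
  assumes "A \<in> carrier_mat n n" "B \<in> carrier_mat n n"
    and "\<And>i j. i < n \<Longrightarrow> j < n \<Longrightarrow> mat_trace (A * mat_unit n i j) = mat_trace (B * mat_unit n i j)"
  shows "A = B"
proof (rule eq_matI)
  fix p q assume "p < dim_row B" "q < dim_col B"
  with assms show "A $$ (p, q) = B $$ (p, q)"
    using assms(3)[of q p] by (simp add: mat_trace_mult_mat_unit)
qed (use assms in auto)

lemma mat_trace_commutator_mult:
  fixes a x y :: "'a :: comm_ring_1 mat"
  assumes "a \<in> carrier_mat n n" "x \<in> carrier_mat n n" "y \<in> carrier_mat n n"
  shows "mat_trace ((a * x - x * a) * y) = mat_trace (a * (x * y - y * x))"
proof -
  have "mat_trace ((a * x - x * a) * y) = mat_trace (a * (x * y)) - mat_trace (x * (a * y))"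
    using assms by (simp add: minus_mult_distrib_mat[of _ n n] mat_trace_minus[of _ n])
  also have "mat_trace (x * (a * y)) = mat_trace (a * (y * x))"
    using assms mat_trace_mult_comm[of x n "a * y"] by simp
  also have "mat_trace (a * (x * y)) - \<dots> = mat_trace (a * (x * y) - a * (y * x))"
    using assms by (intro mat_trace_minus[symmetric]) auto
  also have "a * (x * y) - a * (y * x) = a * (x * y - y * x)"
    using assms by (intro mult_minus_distrib_mat[symmetric]) auto
  finally show ?thesis .
qed

section \<open>Linear maps and derivations\<close>

definition is_linear_map :: "nat \<Rightarrow> ('a :: comm_ring_1 mat \<Rightarrow> 'a mat) \<Rightarrow> bool" where
  "is_linear_map n L \<longleftrightarrow>
     (\<forall>x \<in> carrier_mat n n. L x \<in> carrier_mat n n) \<and>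
     (\<forall>x \<in> carrier_mat n n. \<forall>y \<in> carrier_mat n n. L (x + y) = L x + L y) \<and>
     (\<forall>c. \<forall>x \<in> carrier_mat n n. L (c \<cdot>\<^sub>m x) = c \<cdot>\<^sub>m L x)"

lemma linear_map_carrier: "is_linear_map n L \<Longrightarrow> x \<in> carrier_mat n n \<Longrightarrow> L x \<in> carrier_mat n n"
  and linear_map_add: "is_linear_map n L \<Longrightarrow> x \<in> carrier_mat n n \<Longrightarrow> y \<in> carrier_mat n n \<Longrightarrow>
    L (x + y) = L x + L y"
  and linear_map_smult: "is_linear_map n L \<Longrightarrow> x \<in> carrier_mat n n \<Longrightarrow> L (c \<cdot>\<^sub>m x) = c \<cdot>\<^sub>m L x"
  unfolding is_linear_map_def by blast+

lemma is_derivation_iff: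
  "is_derivation n D \<longleftrightarrow> is_linear_map n D \<and>
     (\<forall>x \<in> carrier_mat n n. \<forall>y \<in> carrier_mat n n. D (x * y) = D x * y + x * D y)"
  unfolding is_derivation_def is_linear_map_def by blast

lemma linear_map_zero:
  assumes "is_linear_map n L"
  shows "L (0\<^sub>m n n) = 0\<^sub>m n n"
proof -
  have "L (0\<^sub>m n n) = L (0 \<cdot>\<^sub>m 0\<^sub>m n n)" by simp
  also have "\<dots> = 0 \<cdot>\<^sub>m L (0\<^sub>m n n)" by (rule linear_map_smult[OF assms zero_carrier_mat])
  also have "\<dots> = 0\<^sub>m n n" using linear_map_carrier[OF assms zero_carrier_mat] by auto
  finally show ?thesis .
qed

definition restrict_mat :: "nat \<Rightarrow> (nat \<times> nat) set \<Rightarrow> 'a :: zero mat \<Rightarrow> 'a mat" where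
  "restrict_mat n S x = mat n n (\<lambda>pq. if pq \<in> S then x $$ pq else 0)"

lemma restrict_mat_carrier [simp]: "restrict_mat n S x \<in> carrier_mat n n"
  by (simp add: restrict_mat_def)

lemma restrict_mat_empty: "restrict_mat n {} x = 0\<^sub>m n n"
  by (rule eq_matI) (auto simp: restrict_mat_def)

lemma restrict_mat_insert:
  fixes x :: "'a :: semiring_1 mat"
  assumes "(i, j) \<notin> S"
  shows "restrict_mat n (insert (i, j) S) x = restrict_mat n S x + x $$ (i, j) \<cdot>\<^sub>m mat_unit n i j"
  by (rule eq_matI) (use assms in \<open>auto simp: restrict_mat_def\<close>)

lemma restrict_mat_full:
  "x \<in> carrier_mat n n \<Longrightarrow> restrict_mat n ({..<n} \<times> {..<n}) x = x"
  by (rule eq_matI) (auto simp: restrict_mat_def)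

lemma linear_map_eq_on_mat_units:
  assumes L1: "is_linear_map n L1" and L2: "is_linear_map n L2"
    and units: "\<And>i j. i < n \<Longrightarrow> j < n \<Longrightarrow> L1 (mat_unit n i j) = L2 (mat_unit n i j)"
    and x: "x \<in> carrier_mat n n"
  shows "L1 x = L2 x"
proof -
  have "S \<subseteq> {..<n} \<times> {..<n} \<Longrightarrow> L1 (restrict_mat n S x) = L2 (restrict_mat n S x)"
    if "finite S" for S
    using that
  proof (induction S rule: finite_induct)
    case empty
    show ?case using linear_map_zero[OF L1] linear_map_zero[OF L2] by (simp add: restrict_mat_empty)
  next
    case (insert ij S)
    obtain i j where ij: "ij = (i, j)" "i < n" "j < n" using insert.prems by auto
    with insert show ?case
      by (simp add: restrict_mat_insert linear_map_add[OF L1] linear_map_add[OF L2]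
        linear_map_smult[OF L1] linear_map_smult[OF L2] units)
  qed
  from this[of "{..<n} \<times> {..<n}"] show ?thesis by (simp add: restrict_mat_full[OF x])
qed

lemma commutator_linear_map:
  fixes a :: "'a :: comm_ring_1 mat"
  assumes a: "a \<in> carrier_mat n n"
  shows "is_linear_map n (\<lambda>x. a * x - x * a)"
  unfolding is_linear_map_def
proof (intro conjI ballI allI)
  fix x y :: "'a mat" assume x: "x \<in> carrier_mat n n" and y: "y \<in> carrier_mat n n"
  have "a * (x + y) = a * x + a * y" "(x + y) * a = x * a + y * a"
    using a x y by (simp_all add: mult_add_distrib_mat add_mult_distrib_mat)
  then show "a * (x + y) - (x + y) * a = a * x - x * a + (a * y - y * a)"
    by (simp only:) (rule eq_matI; use a x y in auto)
next
  fix c and x :: "'a mat" assume x: "x \<in> carrier_mat n n"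
  have "a * (c \<cdot>\<^sub>m x) = c \<cdot>\<^sub>m (a * x)" "(c \<cdot>\<^sub>m x) * a = c \<cdot>\<^sub>m (x * a)"
    using a x by (simp_all add: mult_smult_distrib mult_smult_assoc_mat)
  then show "a * (c \<cdot>\<^sub>m x) - c \<cdot>\<^sub>m x * a = c \<cdot>\<^sub>m (a * x - x * a)"
    by (simp only:) (rule eq_matI; use a x in \<open>auto simp: right_diff_distrib\<close>)
qed (use a in auto)

lemma commutator_is_derivation:
  assumes a: "a \<in> carrier_mat n n"
  shows "is_derivation n (\<lambda>x. a * x - x * a)"
  unfolding is_derivation_iff
proof (intro conjI ballI commutator_linear_map[OF a])
  fix x y :: "complex mat" assume x: "x \<in> carrier_mat n n" and y: "y \<in> carrier_mat n n"
  have "(a * x - x * a) * y = a * (x * y) - x * (a * y)"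
    using a x y by (simp add: minus_mult_distrib_mat[of _ n n])
  moreover have "x * (a * y - y * a) = x * (a * y) - x * (y * a)"
    by (rule mult_minus_distrib_mat) (use a x y in auto)
  ultimately show "a * (x * y) - x * y * a = (a * x - x * a) * y + x * (a * y - y * a)"
    by (intro eq_matI) (use a x y in \<open>auto simp: assoc_mult_mat[OF x y a]\<close>)
qed

lemma derivation_mat_unit_entry:
  assumes D: "is_derivation n D" and ij: "i < n" "j < n" and pq: "p < n" "q < n"
  shows "D (mat_unit n i j) $$ (p, q) =
    (if q = j then D (mat_unit n i 0) $$ (p, 0) else 0) - (if p = i then D (mat_unit n q 0) $$ (j, 0) else 0)"
proof -
  let ?E = "mat_unit n :: nat \<Rightarrow> nat \<Rightarrow> complex mat"
  have n: "0 < n" using ij by simp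
  have L: "is_linear_map n D"
    and leibniz: "\<And>x y. x \<in> carrier_mat n n \<Longrightarrow> y \<in> carrier_mat n n \<Longrightarrow>
      D (x * y) = D x * y + x * D y"
    using D unfolding is_derivation_iff by blast+
  have DE: "D (?E k l) \<in> carrier_mat n n" for k l by (rule linear_map_carrier[OF L mat_unit_carrier])
  then have dim_DE [simp]: "dim_row (D (?E k l)) = n" "dim_col (D (?E k l)) = n" for k l by auto
  have leibniz_entry: "D (?E k l * ?E l' m) $$ (s, t) =
      (if t = m then D (?E k l) $$ (s, l') else 0) + (if s = k then D (?E l' m) $$ (l, t) else 0)"
    if "l < n" "l' < n" "s < n" "t < n" for k l l' m s t
    using leibniz[of "?E k l" "?E l' m"] that DE by (simp del: index_mult_mat add: index_mult_mat_units)
  have "D (?E 0 0) $$ (0, 0) = 0"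
    using leibniz_entry[of 0 0 0 0 0 0] n by (simp add: mat_unit_mult)
  then have "D (?E 0 j) $$ (0, q) + D (?E q 0) $$ (j, 0) = 0"
    using leibniz_entry[of j q 0 0 0 0] n ij pq linear_map_zero[OF L]
    by (cases "j = q") (simp_all add: mat_unit_mult)
  then show ?thesis
    using leibniz_entry[of 0 0 p q i j] ij pq by (simp add: mat_unit_mult eq_neg_iff_add_eq_0)
qed

lemma derivation_is_inner:
  assumes D: "is_derivation n D"
  obtains a where "a \<in> carrier_mat n n" "\<And>x. x \<in> carrier_mat n n \<Longrightarrow> D x = a * x - x * a"
proof
  define a where "a = mat n n (\<lambda>(p, q). D (mat_unit n q 0) $$ (p, 0))"
  show a: "a \<in> carrier_mat n n" by (simp add: a_def)
  have L: "is_linear_map n D" using D by (simp add: is_derivation_iff)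
  have dim_DE [simp]: "dim_row (D (mat_unit n i j)) = n" "dim_col (D (mat_unit n i j)) = n" for i j
    using linear_map_carrier[OF L mat_unit_carrier] by auto
  fix x :: "complex mat" assume x: "x \<in> carrier_mat n n"
  show "D x = a * x - x * a"
  proof (rule linear_map_eq_on_mat_units[OF L commutator_linear_map[OF a] _ x])
    fix i j assume ij: "i < n" "j < n"
    show "D (mat_unit n i j) = a * mat_unit n i j - mat_unit n i j * a"
      by (rule eq_matI)
        (use ij derivation_mat_unit_entry[OF D ij] in
          \<open>auto simp del: index_mult_mat simp: index_mult_mat_units a_def\<close>)
  qed
qed

section \<open>Trace forms constant on cosets of commutants\<close>

definition trace_form :: "('a :: comm_ring_1 mat \<Rightarrow> 'a mat) \<Rightarrow> 'a mat \<Rightarrow> 'a mat \<Rightarrow> 'a" where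
  "trace_form \<Delta> x y = mat_trace (\<Delta> x * y)"

lemma trace_form_add_right:
  "\<Delta> x \<in> carrier_mat n n \<Longrightarrow> y \<in> carrier_mat n n \<Longrightarrow> y' \<in> carrier_mat n n \<Longrightarrow>
    trace_form \<Delta> x (y + y') = trace_form \<Delta> x y + trace_form \<Delta> x y'"
  by (simp add: trace_form_def mult_add_distrib_mat[of _ n n] mat_trace_add[of _ n])

lemma trace_form_minus_right:
  "\<Delta> x \<in> carrier_mat n n \<Longrightarrow> y \<in> carrier_mat n n \<Longrightarrow> y' \<in> carrier_mat n n \<Longrightarrow>
    trace_form \<Delta> x (y - y') = trace_form \<Delta> x y - trace_form \<Delta> x y'"
  by (simp add: trace_form_def mult_minus_distrib_mat[of _ n n] mat_trace_minus[of _ n])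

definition respects_commutants :: "nat \<Rightarrow> ('a :: comm_ring_1 mat \<Rightarrow> 'a mat) \<Rightarrow> bool" where
  "respects_commutants n \<Delta> \<longleftrightarrow>
     (\<forall>x \<in> carrier_mat n n. \<forall>x' \<in> carrier_mat n n. \<forall>y \<in> carrier_mat n n.
        (x - x') * y = y * (x - x') \<longrightarrow> trace_form \<Delta> x y = trace_form \<Delta> x' y)"

lemma respects_commutantsD:
  "respects_commutants n \<Delta> \<Longrightarrow>
    x \<in> carrier_mat n n \<Longrightarrow> x' \<in> carrier_mat n n \<Longrightarrow> y \<in> carrier_mat n n \<Longrightarrow>
    (x - x') * y = y * (x - x') \<Longrightarrow> trace_form \<Delta> x y = trace_form \<Delta> x' y"
  unfolding respects_commutants_def by blast

lemma commutator_eq_if_diff_commutes: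
  fixes x x' y :: "'a :: comm_ring_1 mat"
  assumes x: "x \<in> carrier_mat n n" and x': "x' \<in> carrier_mat n n" and y: "y \<in> carrier_mat n n"
    and comm: "(x - x') * y = y * (x - x')"
  shows "x * y - y * x = x' * y - y * x'"
proof -
  have "x * y - x' * y = y * x - y * x'"
    using comm by (simp add: minus_mult_distrib_mat[OF x x' y] mult_minus_distrib_mat[OF y x x'])
  then have "(x * y) $$ (p, q) - (x' * y) $$ (p, q) = (y * x) $$ (p, q) - (y * x') $$ (p, q)"
    if "p < n" "q < n" for p q
    using that x x' y by (metis carrier_matD index_minus_mat(1) index_mult_mat(2,3))
  then show ?thesis
    by (intro eq_matI)
      (use x x' y in \<open>auto simp del: index_mult_mat simp: index_mult_mat(2,3) algebra_simps\<close>)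
qed

lemma commutator_respects_commutants:
  fixes a :: "'a :: comm_ring_1 mat"
  assumes a: "a \<in> carrier_mat n n"
  shows "respects_commutants n (\<lambda>x. a * x - x * a)"
  unfolding respects_commutants_def
proof (intro ballI impI)
  fix x x' y :: "'a mat" assume x: "x \<in> carrier_mat n n" and x': "x' \<in> carrier_mat n n" and y: "y \<in> carrier_mat n n"
    and "(x - x') * y = y * (x - x')"
  then have "x * y - y * x = x' * y - y * x'" by (rule commutator_eq_if_diff_commutes)
  then show "trace_form (\<lambda>x. a * x - x * a) x y = trace_form (\<lambda>x. a * x - x * a) x' y"
    using a x x' y by (simp add: trace_form_def mat_trace_commutator_mult)
qed

lemma derivation_respects_commutants:
  assumes "is_derivation n D"
  shows "respects_commutants n D"
proof -
  obtain a where a: "a \<in> carrier_mat n n" and D: "\<And>x. x \<in> carrier_mat n n \<Longrightarrow> D x = a * x - x * a"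
    using derivation_is_inner[OF assms] by blast
  show ?thesis
    unfolding respects_commutants_def
  proof (intro ballI impI)
    fix x x' y :: "complex mat"
    assume x: "x \<in> carrier_mat n n" and x': "x' \<in> carrier_mat n n" and y: "y \<in> carrier_mat n n"
      and "(x - x') * y = y * (x - x')"
    then show "trace_form D x y = trace_form D x' y"
      using respects_commutantsD[OF commutator_respects_commutants[OF a] x x' y]
      by (simp only: trace_form_def D)
  qed
qed

lemma trace_form_shift:
  fixes \<Delta> :: "'a :: comm_ring_1 mat \<Rightarrow> 'a mat"
  assumes carrier: "\<And>x. x \<in> carrier_mat n n \<Longrightarrow> \<Delta> x \<in> carrier_mat n n"
    and resp: "respects_commutants n \<Delta>"
    and x: "x \<in> carrier_mat n n" and e: "e \<in> carrier_mat n n" and u: "u \<in> carrier_mat n n"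
  shows "trace_form \<Delta> (x + e) u = trace_form \<Delta> x u + trace_form \<Delta> x e - trace_form \<Delta> (x + u) e"
proof -
  let ?B = "trace_form \<Delta>" and ?w = "x + (u + e)"
  have coset: "?B x' y = ?B x'' y"
    if "x' \<in> carrier_mat n n" "x'' \<in> carrier_mat n n" "x' - x'' = y" "y \<in> carrier_mat n n" for x' x'' y
    using respects_commutantsD[OF resp] that by blast
  have "?B x u + ?B x e = ?B x (u + e)"
    using trace_form_add_right[of \<Delta> x n u e] carrier x u e by simp
  also have "\<dots> = ?B ?w (u + e)" by (rule coset[symmetric]) (use x u e in auto)
  also have "\<dots> = ?B ?w u + ?B ?w e"
    using trace_form_add_right[of \<Delta> ?w n u e] carrier x u e by simp
  also have "?B ?w u = ?B (x + e) u" by (rule coset) (use x u e in auto)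
  also have "?B ?w e = ?B (x + u) e" by (rule coset) (use x u e in auto)
  finally show ?thesis by (simp add: algebra_simps)
qed

lemma trace_form_skew:
  fixes \<Delta> :: "'a :: comm_ring_1 mat \<Rightarrow> 'a mat"
  assumes carrier: "\<And>x. x \<in> carrier_mat n n \<Longrightarrow> \<Delta> x \<in> carrier_mat n n"
    and zero: "\<Delta> (0\<^sub>m n n) = 0\<^sub>m n n"
    and resp: "respects_commutants n \<Delta>"
    and "x \<in> carrier_mat n n" "y \<in> carrier_mat n n"
  shows "trace_form \<Delta> x y = - trace_form \<Delta> y x"
  using trace_form_shift[where \<Delta> = \<Delta>, OF carrier resp zero_carrier_mat assms(4,5)] assms(4,5)
  by (simp add: trace_form_def zero)

lemma respects_commutants_additive:
  fixes \<Delta> :: "'a :: comm_ring_1 mat \<Rightarrow> 'a mat"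
  assumes carrier: "\<And>x. x \<in> carrier_mat n n \<Longrightarrow> \<Delta> x \<in> carrier_mat n n"
    and zero: "\<Delta> (0\<^sub>m n n) = 0\<^sub>m n n"
    and resp: "respects_commutants n \<Delta>"
    and x: "x \<in> carrier_mat n n" and z: "z \<in> carrier_mat n n"
  shows "\<Delta> (x + z) = \<Delta> x + \<Delta> z"
proof (rule mat_eq_by_trace)
  fix i j assume "i < n" "j < n"
  then have E: "mat_unit n i j \<in> carrier_mat n n" by simp
  have skew: "trace_form \<Delta> a b = - trace_form \<Delta> b a"
    if "a \<in> carrier_mat n n" "b \<in> carrier_mat n n" for a b
    by (rule trace_form_skew[OF carrier zero resp that])
  have "trace_form \<Delta> (x + z) (mat_unit n i j) =
      trace_form \<Delta> x (mat_unit n i j) + trace_form \<Delta> z (mat_unit n i j)"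
    using trace_form_shift[where \<Delta> = \<Delta>, OF carrier resp x z E]
      trace_form_add_right[of \<Delta> z n x "mat_unit n i j"]
      skew[OF x z] skew[OF _ z, of "x + mat_unit n i j"] carrier[OF z] x z E
    by (simp add: algebra_simps)
  then show "mat_trace (\<Delta> (x + z) * mat_unit n i j) = mat_trace ((\<Delta> x + \<Delta> z) * mat_unit n i j)"
    using carrier[OF x] carrier[OF z]
    by (simp add: trace_form_def add_mult_distrib_mat[OF carrier[OF x] carrier[OF z] E] mat_trace_add[of _ n])
qed (use carrier x z in auto)

locale commutant_respecting_linear_map =
  fixes n :: nat and \<Delta> :: "'a :: comm_ring_1 mat \<Rightarrow> 'a mat"
  assumes linear: "is_linear_map n \<Delta>" and respects: "respects_commutants n \<Delta>"
begin

abbreviation form :: "'a mat \<Rightarrow> 'a mat \<Rightarrow> 'a" where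
  "form \<equiv> trace_form \<Delta>"

lemma form_add_left:
  "x \<in> carrier_mat n n \<Longrightarrow> x' \<in> carrier_mat n n \<Longrightarrow> y \<in> carrier_mat n n \<Longrightarrow>
    form (x + x') y = form x y + form x' y"
  using linear_map_carrier[OF linear, of x] linear_map_carrier[OF linear, of x']
  by (simp add: trace_form_def linear_map_add[OF linear] add_mult_distrib_mat[of _ n n] mat_trace_add[of _ n])

lemma form_add_right:
  "x \<in> carrier_mat n n \<Longrightarrow> y \<in> carrier_mat n n \<Longrightarrow> y' \<in> carrier_mat n n \<Longrightarrow>
    form x (y + y') = form x y + form x y'"
  by (rule trace_form_add_right[where \<Delta> = \<Delta>, OF linear_map_carrier[OF linear]])

lemma form_minus_right:
  "x \<in> carrier_mat n n \<Longrightarrow> y \<in> carrier_mat n n \<Longrightarrow> y' \<in> carrier_mat n n \<Longrightarrow>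
    form x (y - y') = form x y - form x y'"
  by (rule trace_form_minus_right[where \<Delta> = \<Delta>, OF linear_map_carrier[OF linear]])

lemma form_commuting:
  assumes "x \<in> carrier_mat n n" "y \<in> carrier_mat n n" "x * y = y * x"
  shows "form x y = 0"
proof -
  have "x - 0\<^sub>m n n = x" using assms by (intro eq_matI) auto
  then have "form x y = form (0\<^sub>m n n) y"
    by (intro respects_commutantsD[OF respects]) (use assms in auto)
  then show ?thesis
    using assms by (simp add: trace_form_def linear_map_zero[OF linear])
qed

lemma form_skew: "x \<in> carrier_mat n n \<Longrightarrow> y \<in> carrier_mat n n \<Longrightarrow> form x y = - form y x"
  by (rule trace_form_skew[where \<Delta> = \<Delta>,
        OF linear_map_carrier[OF linear] linear_map_zero[OF linear] respects])

lemma form_mat_units_commuting: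
  assumes "i < n" "j < n" "p < n" "q < n" "j \<noteq> p" "q \<noteq> i"
  shows "form (mat_unit n i j) (mat_unit n p q) = 0"
  using assms by (intro form_commuting) (auto simp: mat_unit_mult)

lemma form_mat_units_chain:
  assumes ijq: "i < n" "j < n" "q < n" and "q \<noteq> i"
  shows "form (mat_unit n i j) (mat_unit n j q) = form (mat_unit n i 0) (mat_unit n 0 q)"
proof (cases "j = 0")
  case False
  let ?x = "mat_unit n i j + mat_unit n i 0 :: 'a mat" and ?y = "mat_unit n j q - mat_unit n 0 q :: 'a mat"
  have "?x * ?y = 0\<^sub>m n n" "?y * ?x = 0\<^sub>m n n"
    using assms False
    by (simp_all add: add_mult_distrib_mat[where nr = n and n = n and nc = n]
        minus_mult_distrib_mat[where nr = n and n = n and nc = n]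
        mult_add_distrib_mat[where nr = n and n = n and nc = n]
        mult_minus_distrib_mat[where nr = n and n = n and nc = n] mat_unit_mult)
  then have "0 = form ?x ?y" by (intro form_commuting[symmetric]) auto
  also have "\<dots> = form (mat_unit n i j) (mat_unit n j q) - form (mat_unit n i j) (mat_unit n 0 q)
      + (form (mat_unit n i 0) (mat_unit n j q) - form (mat_unit n i 0) (mat_unit n 0 q))"
    by (simp add: form_add_left form_minus_right)
  finally show ?thesis
    using assms False by (simp add: form_mat_units_commuting)
qed simp

lemma form_mat_units_cycle:
  assumes "i < n" "j < n" "i \<noteq> j" "i \<noteq> 0" "j \<noteq> 0"
  shows "form (mat_unit n i j) (mat_unit n j i) =
    form (mat_unit n i 0) (mat_unit n 0 i) - form (mat_unit n j 0) (mat_unit n 0 j)"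
proof -
  let ?x = "mat_unit n i j + mat_unit n j 0 + mat_unit n 0 i :: 'a mat"
    and ?y = "mat_unit n j i + mat_unit n 0 j + mat_unit n i 0 :: 'a mat"
  have "?x * ?y = ?y * ?x"
    using assms
    by (simp add: add_mult_distrib_mat[where nr = n and n = n and nc = n]
        mult_add_distrib_mat[where nr = n and n = n and nc = n] mat_unit_mult)
      (rule eq_matI; auto)
  then have "0 = form ?x ?y" by (intro form_commuting[symmetric]) auto
  also have "\<dots> = form (mat_unit n i j) (mat_unit n j i) + form (mat_unit n j 0) (mat_unit n 0 j)
      + form (mat_unit n 0 i) (mat_unit n i 0)"
    using assms by (simp add: form_add_left form_add_right form_mat_units_commuting)
  finally show ?thesis
    using form_skew[of "mat_unit n 0 i" "mat_unit n i 0"] by (simp add: algebra_simps)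
qed

lemma form_mat_units:
  assumes ij: "i < n" "j < n" and pq: "p < n" "q < n"
  shows "form (mat_unit n i j) (mat_unit n p q) =
    (if j = p then form (mat_unit n i 0) (mat_unit n 0 q) else 0) -
    (if q = i then form (mat_unit n p 0) (mat_unit n 0 j) else 0)"
proof -
  have diag: "form (mat_unit n k k) (mat_unit n k k) = 0" for k by (rule form_commuting) auto
  consider "j \<noteq> p" "q \<noteq> i" | "j = p" "q \<noteq> i" | "j \<noteq> p" "q = i" | "j = p" "q = i" by blast
  then show ?thesis
  proof cases
    case 1
    then show ?thesis using assms by (simp add: form_mat_units_commuting)
  next
    case 2
    then show ?thesis using form_mat_units_chain[OF ij pq(2)] by simp
  next
    case 3
    then show ?thesis
      using form_skew[of "mat_unit n i j" "mat_unit n p i"] form_mat_units_chain[OF pq(1) ij]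
      by (simp add: assms)
  next
    case 4
    consider "i = j" | "i \<noteq> j" "i = 0" | "i \<noteq> j" "j = 0" | "i \<noteq> j" "i \<noteq> 0" "j \<noteq> 0" by blast
    then show ?thesis
    proof cases
      case 2
      then show ?thesis using 4 ij diag form_skew[of "mat_unit n 0 j" "mat_unit n j 0"] by simp
    qed (use 4 ij diag form_mat_units_cycle[OF ij] in simp_all)
  qed
qed

lemma commutator_representation:
  obtains a where "a \<in> carrier_mat n n" "\<And>x. x \<in> carrier_mat n n \<Longrightarrow> \<Delta> x = a * x - x * a"
proof
  define a where "a = mat n n (\<lambda>(q, i). form (mat_unit n i 0) (mat_unit n 0 q))"
  show a: "a \<in> carrier_mat n n" by (simp add: a_def)
  fix x :: "'a mat" assume x: "x \<in> carrier_mat n n"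
  show "\<Delta> x = a * x - x * a"
  proof (rule linear_map_eq_on_mat_units[OF linear commutator_linear_map[OF a] _ x])
    fix i j assume ij: "i < n" "j < n"
    let ?c = "a * mat_unit n i j - mat_unit n i j * a"
    show "\<Delta> (mat_unit n i j) = ?c"
    proof (rule mat_eq_by_trace)
      fix p q assume pq: "p < n" "q < n"
      have "mat_trace (?c * mat_unit n p q) = ?c $$ (q, p)"
        using a pq by (intro mat_trace_mult_mat_unit) auto
      also have "\<dots> = (if j = p then a $$ (q, i) else 0) - (if q = i then a $$ (j, p) else 0)"
        using a ij pq by (simp del: index_mult_mat add: index_mult_mat_units)
      also have "\<dots> = form (mat_unit n i j) (mat_unit n p q)"
        by (subst form_mat_units[OF ij pq]) (use ij pq in \<open>simp add: a_def\<close>)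
      finally show "mat_trace (\<Delta> (mat_unit n i j) * mat_unit n p q) = mat_trace (?c * mat_unit n p q)"
        by (simp add: trace_form_def)
    qed (use a linear_map_carrier[OF linear mat_unit_carrier] in auto)
  qed
qed

end

section \<open>Weak-2-local derivations\<close>

lemma weak_2_local_derivation_carrier:
  "weak_2_local_derivation n \<Delta> \<Longrightarrow> x \<in> carrier_mat n n \<Longrightarrow> \<Delta> x \<in> carrier_mat n n"
  unfolding weak_2_local_derivation_def by blast

lemma weak_2_local_derivation_agrees:
  assumes "weak_2_local_derivation n \<Delta>" "is_dual_functional n \<phi>"
    and "x \<in> carrier_mat n n" "y \<in> carrier_mat n n"
  obtains D where "is_derivation n D" "\<phi> (\<Delta> x) = \<phi> (D x)" "\<phi> (\<Delta> y) = \<phi> (D y)"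
proof -
  have "\<forall>A \<in> carrier_mat n n. \<forall>B \<in> carrier_mat n n. \<forall>\<phi>. is_dual_functional n \<phi> \<longrightarrow>
      (\<exists>D. is_derivation n D \<and> \<phi> (\<Delta> A) = \<phi> (D A) \<and> \<phi> (\<Delta> B) = \<phi> (D B))"
    using assms(1) unfolding weak_2_local_derivation_def by (rule conjunct2)
  with assms(2-4) that show ?thesis by blast
qed

lemma weak_2_local_derivation_smult:
  assumes w: "weak_2_local_derivation n \<Delta>" and x: "x \<in> carrier_mat n n"
  shows "\<Delta> (c \<cdot>\<^sub>m x) = c \<cdot>\<^sub>m \<Delta> x"
proof (rule eq_matI)
  fix p q assume "p < dim_row (c \<cdot>\<^sub>m \<Delta> x)" "q < dim_col (c \<cdot>\<^sub>m \<Delta> x)"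
  then have pq: "p < n" "q < n" using weak_2_local_derivation_carrier[OF w x] by auto
  have "is_dual_functional n (\<lambda>M. M $$ (p, q))"
    unfolding is_dual_functional_def using pq by auto
  then obtain D where D: "is_derivation n D"
    and "\<Delta> (c \<cdot>\<^sub>m x) $$ (p, q) = D (c \<cdot>\<^sub>m x) $$ (p, q)" "\<Delta> x $$ (p, q) = D x $$ (p, q)"
    using weak_2_local_derivation_agrees[OF w _ smult_carrier_mat[OF x] x] by blast
  moreover have "D (c \<cdot>\<^sub>m x) = c \<cdot>\<^sub>m D x" "D x \<in> carrier_mat n n"
    using D x unfolding is_derivation_def by blast+
  ultimately show "\<Delta> (c \<cdot>\<^sub>m x) $$ (p, q) = (c \<cdot>\<^sub>m \<Delta> x) $$ (p, q)"
    using pq weak_2_local_derivation_carrier[OF w x] by simp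
qed (use carrier_matD[OF weak_2_local_derivation_carrier[OF w x]]
    carrier_matD[OF weak_2_local_derivation_carrier[OF w smult_carrier_mat[OF x]]] in simp_all)

lemma weak_2_local_derivation_zero:
  assumes "weak_2_local_derivation n \<Delta>"
  shows "\<Delta> (0\<^sub>m n n) = 0\<^sub>m n n"
proof -
  have "\<Delta> (0\<^sub>m n n) = 0 \<cdot>\<^sub>m \<Delta> (0\<^sub>m n n)"
    using weak_2_local_derivation_smult[OF assms zero_carrier_mat, of 0] by simp
  also have "\<dots> = 0\<^sub>m n n"
    using weak_2_local_derivation_carrier[OF assms zero_carrier_mat] by (intro eq_matI) auto
  finally show ?thesis .
qed

lemma weak_2_local_derivation_respects_commutants:
  assumes w: "weak_2_local_derivation n \<Delta>"
  shows "respects_commutants n \<Delta>"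
  unfolding respects_commutants_def
proof (intro ballI impI)
  fix x x' y :: "complex mat"
  assume x: "x \<in> carrier_mat n n" and x': "x' \<in> carrier_mat n n" and y: "y \<in> carrier_mat n n"
    and comm: "(x - x') * y = y * (x - x')"
  have "is_dual_functional n (\<lambda>M. mat_trace (M * y))"
    unfolding is_dual_functional_def
    using y by (simp add: add_mult_distrib_mat[of _ n n] mult_smult_assoc_mat[of _ n n]
        mat_trace_add[of _ n] mat_trace_smult[of _ n])
  then obtain D where D: "is_derivation n D"
    and "mat_trace (\<Delta> x * y) = mat_trace (D x * y)" "mat_trace (\<Delta> x' * y) = mat_trace (D x' * y)"
    using weak_2_local_derivation_agrees[OF w _ x x'] by blast
  then show "trace_form \<Delta> x y = trace_form \<Delta> x' y"
    using respects_commutantsD[OF derivation_respects_commutants[OF D] x x' y comm]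
    by (simp add: trace_form_def)
qed

theorem theorem2p12:
  fixes n :: nat and \<Delta> :: "complex mat \<Rightarrow> complex mat"
  assumes "weak_2_local_derivation n \<Delta>"
  shows "is_derivation n \<Delta>"
proof -
  note carrier = weak_2_local_derivation_carrier[OF assms]
  have zero: "\<Delta> (0\<^sub>m n n) = 0\<^sub>m n n" by (rule weak_2_local_derivation_zero[OF assms])
  have respects: "respects_commutants n \<Delta>"
    by (rule weak_2_local_derivation_respects_commutants[OF assms])
  have linear: "is_linear_map n \<Delta>"
    unfolding is_linear_map_def
    using carrier respects_commutants_additive[OF carrier zero respects]
      weak_2_local_derivation_smult[OF assms] by blast
  then interpret commutant_respecting_linear_map n \<Delta>
    using respects by unfold_locales
  obtain a where a: "a \<in> carrier_mat n n"
    and inner: "\<And>x. x \<in> carrier_mat n n \<Longrightarrow> \<Delta> x = a * x - x * a"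
    using commutator_representation by blast
  have "\<Delta> (x * y) = \<Delta> x * y + x * \<Delta> y" if "x \<in> carrier_mat n n" "y \<in> carrier_mat n n" for x y
    using commutator_is_derivation[OF a] that by (simp add: is_derivation_def inner)
  with linear show ?thesis unfolding is_derivation_iff by blast
qed

end
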